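(* Let $\mathcal M=(E_{2n},\mathcal C)$ be a P-matroid, let $i\in[n]$, and let $\widehat{\mathcal M}$ be the lexicographic extension of $\mathcal M$ by $[-\cdot t_i]$. Let $O$ be the partial P-matroid USO defined by $\widehat{\mathcal M}$. Then: (a) for every $v$ with $v_i=1$ we have $O(v)_i=-$ and $O(v)_j=0$ for all $j\neq i$ (so the upper $i$-facet $\{v:v_i=1\}$ is a maximal unoriented subcube); (b) for every $w$ with $w_i=0$ we have $O(w)_i=+$ (so the upper $i$-facet is a hypersink, i.e., a hypervertex all of whose incident edges in dimension $i$ are incoming); (c) if $\mathcal M$ is uniform, then $O(w)_j\neq0$ for all $w$ with $w_i=0$ and all $j\in[n]$.
   Context: An oriented matroid $(E,\mathcal C)$ is given by circuits $X\in\{-,0,+\}^E$ with support $\underline X$; bases are inclusion-maximal subsets containing no circuit support; all bases have the same size (the rank); the oriented matroid is uniform if every subset of size equal to the rank is a basis. Cocircuits $\mathcal C^*$ are the circuits of the dual (inclusion-minimal nonzero signed sets orthogonal to all circuits). For a basis $B$, $e\notin B$: $C(B,e)$ is the unique circuit $X$ with $X_e=+$, $\underline X\subseteq B\cup\{e\}$; for $e\in B$: $C^*(B,e)$ is the unique cocircuit $D$ with $D_e=+$, $\underline D\cap(B\setminus\{e\})=\emptyset$. A localization for $\mathcal M$ is a function $\sigma:\mathcal C^*\to\{-,0,+\}$ specifying an extension $\widehat{\mathcal M}$ to $E\cup\{q\}$ such that for every cocircuit $Y$ of $\mathcal M$, $(Y,\sigma(Y))$ (sign $\sigma(Y)$ on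 $q$) is a cocircuit of $\widehat{\mathcal M}$. For $e\in E$ and $s\in\{-,0,+\}$, the function $\sigma(D)=s\cdot D_e$ if $D_e\neq0$, $\sigma(D)=0$ otherwise, is a localization; the extension it specifies is the lexicographic extension by $[s\cdot e]$. $S=\{s_1,\dots,s_n\}$, $T=\{t_1,\dots,t_n\}$, $E_{2n}=S\cup T$; a P-matroid is an oriented matroid on $E_{2n}$ in which $S$ is a basis and no circuit $X$ satisfies $X_{s_i}=-X_{t_i}$ for all $i$ with $\{s_i,t_i\}\subseteq\underline X$. For $v\in\{0,1\}^n$, $B(v)=\{s_j:v_j=0\}\cup\{t_j:v_j=1\}$. The partial P-matroid USO of $\widehat{\mathcal M}$ is $O:\{0,1\}^n\to\{-,0,+\}^n$ with, for $C=C(B(v),q)$ and $e=s_j$ if $v_j=0$, $e=t_j$ if $v_j=1$: $O(v)_j=+$ if $C_e=-$ (outgoing), $-$ if $C_e=+$ (incoming), $0$ if $C_e=0$ (unoriented). *)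

theory Defs
  imports Main
begin

datatype sign = Neg | Zero | Pos

fun sneg :: "sign \<Rightarrow> sign" where
  "sneg Neg = Pos" | "sneg Zero = Zero" | "sneg Pos = Neg"

fun smult :: "sign \<Rightarrow> sign \<Rightarrow> sign" where
  "smult Zero _ = Zero" | "smult _ Zero = Zero"
| "smult Pos x = x" | "smult Neg x = sneg x"

type_synonym 'a signed = "'a \<Rightarrow> sign"

definition supp :: "'a signed \<Rightarrow> 'a set" where
  "supp X = {e. X e \<noteq> Zero}"

definition posp :: "'a signed \<Rightarrow> 'a set" where
  "posp X = {e. X e = Pos}"

definition negp :: "'a signed \<Rightarrow> 'a set" where
  "negp X = {e. X e = Neg}"

definition zero_signed :: "'a signed" where
  "zero_signed = (\<lambda>_. Zero)"

definition neg_signed :: "'a signed \<Rightarrow> 'a signed" where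
  "neg_signed X = (\<lambda>e. sneg (X e))"

definition oriented_matroid :: "'a set \<Rightarrow> 'a signed set \<Rightarrow> bool" where
  "oriented_matroid E C \<longleftrightarrow>
     finite E \<and>
     (\<forall>X\<in>C. supp X \<subseteq> E) \<and>
     zero_signed \<notin> C \<and>
     (\<forall>X\<in>C. neg_signed X \<in> C) \<and>
     (\<forall>X\<in>C. \<forall>Y\<in>C. supp X \<subseteq> supp Y \<longrightarrow> X = Y \<or> X = neg_signed Y) \<and>
     (\<forall>X\<in>C. \<forall>Y\<in>C. \<forall>e. X \<noteq> neg_signed Y \<and> X e = Pos \<and> Y e = Neg \<longrightarrow>
        (\<exists>Z\<in>C. posp Z \<subseteq> (posp X \<union> posp Y) - {e} \<and>
                negp Z \<subseteq> (negp X \<union> negp Y) - {e}))"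

definition independent :: "'a set \<Rightarrow> 'a signed set \<Rightarrow> 'a set \<Rightarrow> bool" where
  "independent E C A \<longleftrightarrow> A \<subseteq> E \<and> \<not> (\<exists>X\<in>C. supp X \<subseteq> A)"

definition basis :: "'a set \<Rightarrow> 'a signed set \<Rightarrow> 'a set \<Rightarrow> bool" where
  "basis E C B \<longleftrightarrow> independent E C B \<and>
     (\<forall>A. independent E C A \<longrightarrow> B \<subseteq> A \<longrightarrow> A = B)"

definition uniform :: "'a set \<Rightarrow> 'a signed set \<Rightarrow> bool" where
  "uniform E C \<longleftrightarrow>
     (\<forall>B A. basis E C B \<longrightarrow> A \<subseteq> E \<longrightarrow> card A = card B \<longrightarrow> basis E C A)"

definition orthogonal :: "'a signed \<Rightarrow> 'a signed \<Rightarrow> bool" where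
  "orthogonal X Y \<longleftrightarrow> supp X \<inter> supp Y = {} \<or>
     (\<exists>e f. smult (X e) (Y e) = Pos \<and> smult (X f) (Y f) = Neg)"

definition covector_cand :: "'a set \<Rightarrow> 'a signed set \<Rightarrow> 'a signed \<Rightarrow> bool" where
  "covector_cand E C D \<longleftrightarrow> D \<noteq> zero_signed \<and> supp D \<subseteq> E \<and> (\<forall>X\<in>C. orthogonal D X)"

definition cocircuits :: "'a set \<Rightarrow> 'a signed set \<Rightarrow> 'a signed set" where
  "cocircuits E C = {D. covector_cand E C D \<and>
     \<not> (\<exists>D'. covector_cand E C D' \<and> supp D' \<subset> supp D)}"

definition fund_circuit :: "'a signed set \<Rightarrow> 'a set \<Rightarrow> 'a \<Rightarrow> 'a signed" where
  "fund_circuit C B e = (THE X. X \<in> C \<and> X e = Pos \<and> supp X \<subseteq> insert e B)"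

section \<open>Single-element extensions; the new element q is None\<close>

definition lift :: "'a signed \<Rightarrow> sign \<Rightarrow> 'a option signed" where
  "lift Y s = (\<lambda>x. case x of None \<Rightarrow> s | Some e \<Rightarrow> Y e)"

definition ext_ground :: "'a set \<Rightarrow> 'a option set" where
  "ext_ground E = insert None (Some ` E)"

definition lex_loc :: "sign \<Rightarrow> 'a \<Rightarrow> 'a signed \<Rightarrow> sign" where
  "lex_loc s e D = smult s (D e)"

definition lex_extension ::
  "'a set \<Rightarrow> 'a signed set \<Rightarrow> 'a option signed set \<Rightarrow> sign \<Rightarrow> 'a \<Rightarrow> bool" where
  "lex_extension E C Ch s e \<longleftrightarrow>
     oriented_matroid (ext_ground E) Ch \<and>
     {X \<in> Ch. X None = Zero} = (\<lambda>Y. lift Y Zero) ` C \<and>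
     (\<forall>Y\<in>cocircuits E C. lift Y (lex_loc s e Y) \<in> cocircuits (ext_ground E) Ch)"

section \<open>P-matroids: s_i = Inl i, t_i = Inr i\<close>

definition E2n :: "nat \<Rightarrow> (nat + nat) set" where
  "E2n n = Inl ` {..<n} \<union> Inr ` {..<n}"

definition Sset :: "nat \<Rightarrow> (nat + nat) set" where
  "Sset n = Inl ` {..<n}"

definition P_matroid :: "nat \<Rightarrow> (nat + nat) signed set \<Rightarrow> bool" where
  "P_matroid n C \<longleftrightarrow> oriented_matroid (E2n n) C \<and> basis (E2n n) C (Sset n) \<and>
     \<not> (\<exists>X\<in>C. \<forall>i<n. {Inl i, Inr i} \<subseteq> supp X \<longrightarrow> X (Inl i) = sneg (X (Inr i)))"

text \<open>Vertices v of {0,1}^n are encoded as v :: nat => bool (True = 1);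
  only v j for j < n matters.\<close>
definition Bv :: "nat \<Rightarrow> (nat \<Rightarrow> bool) \<Rightarrow> (nat + nat) set" where
  "Bv n v = {Inl j |j. j < n \<and> \<not> v j} \<union> {Inr j |j. j < n \<and> v j}"

definition puso ::
  "nat \<Rightarrow> (nat + nat) option signed set \<Rightarrow> (nat \<Rightarrow> bool) \<Rightarrow> nat \<Rightarrow> sign" where
  "puso n Ch v j =
     (let X = fund_circuit Ch (Some ` Bv n v) None;
          e = (if v j then Some (Inr j) else Some (Inl j))
      in (case X e of Neg \<Rightarrow> Pos | Pos \<Rightarrow> Neg | Zero \<Rightarrow> Zero))"

end

theory Submission
  imports Defs
begin

(* In the lexicographic extension by [-t_i] the new element q is parallel to t_i: the signed
   set that is + on q and on t_i is a circuit. Indeed, q is not a coloop, since the localization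
   of a fundamental cocircuit through t_i is nonzero, and orthogonality to the lifted fundamental
   cocircuits of a basis B(v) containing t_i pins down the circuit of q in B(v) + q. So for v_i = 1
   the fundamental circuit C(B(v),q) is this pair, which gives (a).
   For w_i = 0, eliminating t_i between the pair and C(B(w),t_i), and then q against the pair,
   shows that C(B(w),q) is -C(B(w),t_i) with t_i replaced by q. The P-matroid condition applied to
   C(B(w),t_i), whose only complementary pair can be {s_i,t_i}, makes its s_i-entry equal to its
   t_i-entry +, which gives (b); in the uniform case C(B(w),t_i) meets every element of B(w),
   since B(w) + t_i minus any element is again a basis, which gives (c). *)

lemma sneg_sneg [simp]: "sneg (sneg x) = x"
  by (cases x) auto

lemma sneg_eq_Zero_iff [simp]: "sneg x = Zero \<longleftrightarrow> x = Zero" "Zero = sneg x \<longleftrightarrow> x = Zero"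
  by (cases x; simp)+

lemma sneg_eq_sign_iff [simp]: "sneg x = Pos \<longleftrightarrow> x = Neg" "sneg x = Neg \<longleftrightarrow> x = Pos"
  by (cases x; simp)+

lemma smult_Pos_left [simp]: "smult Pos x = x"
  by (cases x) auto

lemma smult_Pos_right [simp]: "smult x Pos = x"
  by (cases x) auto

lemma smult_Neg_left [simp]: "smult Neg x = sneg x"
  by (cases x) auto

lemma smult_sneg_right: "smult d (sneg x) = sneg (smult d x)"
  by (cases d; cases x) auto

lemma smult_eq_Zero_iff [simp]:
  "smult x y = Zero \<longleftrightarrow> x = Zero \<or> y = Zero" "Zero = smult x y \<longleftrightarrow> x = Zero \<or> y = Zero"
  by (cases x; cases y; simp)+

lemma smult_Zero_right [simp]: "smult x Zero = Zero"
  by (cases x) auto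

lemma neg_signed_apply [simp]: "neg_signed X k = sneg (X k)"
  by (simp add: neg_signed_def)

lemma neg_signed_neg_signed [simp]: "neg_signed (neg_signed X) = X"
  by (simp add: neg_signed_def)

lemma supp_neg_signed [simp]: "supp (neg_signed X) = supp X"
  by (simp add: supp_def)

lemma in_supp_iff: "k \<in> supp X \<longleftrightarrow> X k \<noteq> Zero"
  by (simp add: supp_def)

text \<open>The sign condition of circuit elimination: Z+ \<subseteq> X+ \<union> Y+ and Z- \<subseteq> X- \<union> Y-.\<close>
definition signs_within :: "'a signed \<Rightarrow> 'a signed \<Rightarrow> 'a signed \<Rightarrow> bool" where
  "signs_within Z X Y \<longleftrightarrow> (\<forall>k. Z k = Zero \<or> Z k = X k \<or> Z k = Y k)"

lemma signs_withinD: "signs_within Z X Y \<Longrightarrow> Z k = Zero \<or> Z k = X k \<or> Z k = Y k"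
  by (simp add: signs_within_def)

lemma supp_signs_within: "signs_within Z X Y \<Longrightarrow> supp Z \<subseteq> supp X \<union> supp Y"
  by (auto simp: signs_within_def supp_def)

lemma signs_within_swap: "signs_within Z X Y \<Longrightarrow> signs_within Z Y X"
  by (auto simp: signs_within_def)

lemma independent_no_circuit: "independent E C A \<Longrightarrow> X \<in> C \<Longrightarrow> \<not> supp X \<subseteq> A"
  by (auto simp: independent_def)

lemma basis_independent: "basis E C B \<Longrightarrow> independent E C B"
  by (simp add: basis_def)

lemma basis_subset: "basis E C B \<Longrightarrow> B \<subseteq> E"
  by (simp add: basis_def independent_def)

lemma basis_insert_dependent:
  assumes "basis E C B" "f \<in> E" "f \<notin> B"
  shows "\<exists>X\<in>C. supp X \<subseteq> insert f B"
proof (rule ccontr)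
  assume "\<not> ?thesis"
  then have "independent E C (insert f B)"
    using assms basis_subset[OF assms(1)] by (auto simp: independent_def)
  then show False
    using assms unfolding basis_def by blast
qed

context
  fixes E :: "'a set" and C :: "'a signed set"
  assumes om: "oriented_matroid E C"
begin

lemma om_finite_ground: "finite E"
  using om by (simp add: oriented_matroid_def)

lemma om_supp_subset: "X \<in> C \<Longrightarrow> supp X \<subseteq> E"
  using om by (simp add: oriented_matroid_def)

lemma om_finite_supp: "X \<in> C \<Longrightarrow> finite (supp X)"
  using om_supp_subset om_finite_ground finite_subset by blast

lemma om_neg_closed: "X \<in> C \<Longrightarrow> neg_signed X \<in> C"
  using om by (simp add: oriented_matroid_def)

lemma om_supp_incomparable:
  "X \<in> C \<Longrightarrow> Y \<in> C \<Longrightarrow> supp X \<subseteq> supp Y \<Longrightarrow> X = Y \<or> X = neg_signed Y"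
  using om by (simp add: oriented_matroid_def)

lemma circuit_elimination_Pos:
  assumes "X \<in> C" "Y \<in> C" "X \<noteq> neg_signed Y" "X e = Pos" "Y e = Neg"
  shows "\<exists>Z\<in>C. Z e = Zero \<and> signs_within Z X Y"
proof -
  obtain Z where Z: "Z \<in> C" "posp Z \<subseteq> posp X \<union> posp Y - {e}" "negp Z \<subseteq> negp X \<union> negp Y - {e}"
    using om assms unfolding oriented_matroid_def by blast
  have "Z k = Zero \<or> Z k = X k \<or> Z k = Y k" "Z e = Zero" for k
    using Z(2,3) by (cases "Z k"; cases "Z e"; auto simp: posp_def negp_def)+
  then show ?thesis
    using Z(1) by (auto simp: signs_within_def)
qed

lemma circuit_elimination:
  assumes X: "X \<in> C" and Y: "Y \<in> C" and "X \<noteq> neg_signed Y" "X e \<noteq> Zero" "Y e = sneg (X e)"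
  shows "\<exists>Z\<in>C. Z e = Zero \<and> signs_within Z X Y"
proof (cases "X e")
  case Pos
  then show ?thesis using circuit_elimination_Pos[OF X Y] assms by simp
next
  case Neg
  have "Y \<noteq> neg_signed X" using assms(3) by auto
  then show ?thesis
    using circuit_elimination_Pos[OF Y X] Neg assms signs_within_swap by fastforce
qed (use assms in auto)

text \<open>The one-step repair loop of strong elimination: coordinates of W taken from -Z1
  are removed by eliminating against Z1, which keeps e and f as they are.\<close>
lemma signs_within_repair:
  assumes Z1: "Z1 \<in> C" "Z1 e = Zero" "Z1 f = Zero" "signs_within Z1 X Y"
    and elim_Z1: "\<And>W k. W \<in> C \<Longrightarrow> W e = Zero \<Longrightarrow> W f \<noteq> Zero
       \<Longrightarrow> \<forall>j. W j = Zero \<or> W j = X j \<or> W j = Y j \<or> W j = sneg (Z1 j)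
       \<Longrightarrow> W k \<noteq> Zero \<Longrightarrow> Z1 k = sneg (W k)
       \<Longrightarrow> \<exists>W'\<in>C. W' k = Zero \<and> W' f \<noteq> Zero \<and> signs_within W' W Z1"
  shows "W \<in> C \<Longrightarrow> W e = Zero \<Longrightarrow> W f \<noteq> Zero
    \<Longrightarrow> \<forall>j. W j = Zero \<or> W j = X j \<or> W j = Y j \<or> W j = sneg (Z1 j)
    \<Longrightarrow> \<exists>Z\<in>C. Z e = Zero \<and> Z f \<noteq> Zero \<and> signs_within Z X Y"
proof (induction "card {k. W k \<noteq> Zero \<and> W k \<noteq> X k \<and> W k \<noteq> Y k}" arbitrary: W rule: less_induct)
  case less
  let ?bad = "\<lambda>W. {k. W k \<noteq> Zero \<and> W k \<noteq> X k \<and> W k \<noteq> Y k}"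
  show ?case
  proof (cases "?bad W = {}")
    case True
    then show ?thesis using less.prems unfolding signs_within_def by blast
  next
    case False
    then obtain k where k: "k \<in> ?bad W" by blast
    then have "Z1 k = sneg (W k)" "W k \<noteq> Zero" using less.prems(4) by force+
    then obtain W' where W': "W' \<in> C" "W' k = Zero" "W' f \<noteq> Zero" "signs_within W' W Z1"
      using elim_Z1[OF less.prems] by blast
    have W'e: "W' e = Zero"
      using signs_withinD[OF W'(4), of e] less.prems(2) Z1(2) by auto
    have W'_signs: "\<forall>j. W' j = Zero \<or> W' j = X j \<or> W' j = Y j \<or> W' j = sneg (Z1 j)"
      using W'(4) Z1(4) less.prems(4) unfolding signs_within_def by metis
    have "?bad W' \<subseteq> ?bad W"
    proof
      fix j assume "j \<in> ?bad W'"
      then show "j \<in> ?bad W"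
        using signs_withinD[OF W'(4), of j] signs_withinD[OF Z1(4), of j] by auto
    qed
    then have "?bad W' \<subset> ?bad W"
      using W'(2) k by blast
    moreover have "finite (?bad W)"
      using om_finite_supp[OF less.prems(1)] by (rule finite_subset[rotated]) (auto simp: supp_def)
    ultimately have "card (?bad W') < card (?bad W)"
      by (rule psubset_card_mono[rotated])
    then show ?thesis using less.hyps W'(1,3) W'e W'_signs by blast
  qed
qed

lemma strong_circuit_elimination:
  "X \<in> C \<Longrightarrow> Y \<in> C \<Longrightarrow> X e \<noteq> Zero \<Longrightarrow> Y e = sneg (X e) \<Longrightarrow> X f \<noteq> Zero \<Longrightarrow> Y f = Zero
    \<Longrightarrow> \<exists>Z\<in>C. Z e = Zero \<and> Z f \<noteq> Zero \<and> signs_within Z X Y"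
proof (induction "card (supp X \<union> supp Y)" arbitrary: X Y e f rule: less_induct)
  case less
  have X: "X \<in> C" "X e \<noteq> Zero" "X f \<noteq> Zero" and Y: "Y \<in> C" "Y e = sneg (X e)" "Y f = Zero"
    using less.prems by auto
  have fin: "finite (supp X \<union> supp Y)"
    using om_finite_supp X(1) Y(1) by blast
  have "X \<noteq> neg_signed Y" using X(3) Y(3) by auto
  then obtain Z1 where Z1: "Z1 \<in> C" "Z1 e = Zero" "signs_within Z1 X Y"
    using circuit_elimination X(1,2) Y(1,2) by blast
  have supp_Z1: "supp Z1 \<subseteq> supp X \<union> supp Y"
    using supp_signs_within[OF Z1(3)] .
  show ?case
  proof (cases "Z1 f = Zero")
    case False
    then show ?thesis using Z1 by blast
  next
    case Z1f: True
    text \<open>Z1 is not supported in X, so it uses a coordinate g of Y outside X; first g is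
      eliminated between Y and -Z1, then e between X and the result; both pairs have smaller
      union of supports.\<close>
    have "\<not> supp Z1 \<subseteq> supp X"
      using om_supp_incomparable[OF Z1(1) X(1)] Z1(2) X(2) by auto
    then obtain g where g: "Z1 g \<noteq> Zero" "X g = Zero"
      by (auto simp: supp_def)
    then have Yg: "Y g = Z1 g"
      using signs_withinD[OF Z1(3), of g] by auto
    have "supp Y \<union> supp (neg_signed Z1) \<subset> supp X \<union> supp Y"
      using supp_Z1 X(3) Y(3) Z1f by (auto simp: supp_def)
    then obtain Y' where Y': "Y' \<in> C" "Y' g = Zero" "Y' e \<noteq> Zero" "signs_within Y' Y (neg_signed Z1)"
      using less.hyps[OF psubset_card_mono[OF fin] Y(1) om_neg_closed[OF Z1(1)], of g e]
        g(1) Yg Y(2) X(2) Z1(2) by auto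
    have Y'e: "Y' e = Y e" and Y'f: "Y' f = Zero"
      using signs_withinD[OF Y'(4), of e] signs_withinD[OF Y'(4), of f] Y'(3) Z1(2) Y(3) Z1f by auto
    have "supp Y' \<subseteq> supp Y \<union> supp Z1 - {g}"
      using supp_signs_within[OF Y'(4)] Y'(2) by (auto simp: supp_def)
    then have "supp X \<union> supp Y' \<subset> supp X \<union> supp Y"
      using supp_Z1 g Yg by (auto simp: supp_def)
    then obtain W where W: "W \<in> C" "W e = Zero" "W f \<noteq> Zero" "signs_within W X Y'"
      using less.hyps[OF psubset_card_mono[OF fin] X(1) Y'(1) X(2) _ X(3) Y'f] Y'e Y(2) by auto
    have W_signs: "\<forall>k. W k = Zero \<or> W k = X k \<or> W k = Y k \<or> W k = sneg (Z1 k)"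
      using W(4) Y'(4) unfolding signs_within_def by (metis neg_signed_apply)
    show ?thesis
    proof (rule signs_within_repair[OF Z1(1,2) Z1f Z1(3) _ W(1-3) W_signs])
      fix V k assume V: "V \<in> C" "V e = Zero" "V f \<noteq> Zero"
        "\<forall>j. V j = Zero \<or> V j = X j \<or> V j = Y j \<or> V j = sneg (Z1 j)"
        and k: "V k \<noteq> Zero" "Z1 k = sneg (V k)"
      have "supp V \<subseteq> supp X \<union> supp Y"
        using V(4) supp_Z1 by (force simp: supp_def)
      then have "supp V \<union> supp Z1 \<subset> supp X \<union> supp Y"
        using V(2) Z1(2) X(2) supp_Z1 by (auto simp: supp_def)
      then show "\<exists>V'\<in>C. V' k = Zero \<and> V' f \<noteq> Zero \<and> signs_within V' V Z1"
        using less.hyps[OF psubset_card_mono[OF fin] V(1) Z1(1) k V(3) Z1f] by blast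
    qed
  qed
qed

lemma fund_circuit_exists:
  assumes B: "basis E C B" and f: "f \<in> E" "f \<notin> B"
  shows "\<exists>X\<in>C. X f = Pos \<and> supp X \<subseteq> insert f B"
proof -
  obtain X where X: "X \<in> C" "supp X \<subseteq> insert f B"
    using basis_insert_dependent[OF B f] by blast
  have "X f \<noteq> Zero"
    using X independent_no_circuit[OF basis_independent[OF B] X(1)] by (auto simp: supp_def)
  then show ?thesis
  proof (cases "X f")
    case Neg
    then show ?thesis
      using X om_neg_closed[OF X(1)] by (intro bexI[of _ "neg_signed X"]) auto
  qed (use X in auto)
qed

lemma fund_circuit_unique:
  assumes I: "independent E C B" and f: "f \<notin> B"
    and X: "X \<in> C" "X f = Pos" "supp X \<subseteq> insert f B"
    and Y: "Y \<in> C" "Y f = Pos" "supp Y \<subseteq> insert f B"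
  shows "X = Y"
proof (rule ccontr)
  assume "X \<noteq> Y"
  then have "X \<noteq> neg_signed (neg_signed Y)" by simp
  then obtain Z where Z: "Z \<in> C" "Z f = Zero" "signs_within Z X (neg_signed Y)"
    using circuit_elimination[OF X(1) om_neg_closed[OF Y(1)], of f] X(2) Y(2) by auto
  have "supp Z \<subseteq> B"
    using supp_signs_within[OF Z(3)] X(3) Y(3) Z(2) by (auto simp: supp_def)
  then show False
    using independent_no_circuit[OF I Z(1)] by blast
qed

lemma fund_circuit_eq:
  assumes "independent E C B" "f \<notin> B" "X \<in> C" "X f = Pos" "supp X \<subseteq> insert f B"
  shows "fund_circuit C B f = X"
  unfolding fund_circuit_def
  by (rule the_equality) (use assms fund_circuit_unique in auto)

lemma fund_circuit:
  assumes "basis E C B" "f \<in> E" "f \<notin> B"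
  shows "fund_circuit C B f \<in> C" "fund_circuit C B f f = Pos"
    "supp (fund_circuit C B f) \<subseteq> insert f B"
  using fund_circuit_exists[OF assms] fund_circuit_eq[OF basis_independent[OF assms(1)] assms(3)]
  by auto

lemma fund_circuit_or_neg:
  assumes I: "independent E C B" and f: "f \<notin> B"
    and X: "X \<in> C" "X f \<noteq> Zero" "supp X \<subseteq> insert f B"
  shows "X = fund_circuit C B f \<or> X = neg_signed (fund_circuit C B f)"
proof (cases "X f")
  case Pos
  then show ?thesis using fund_circuit_eq[OF I f X(1) _ X(3)] by simp
next
  case Neg
  then have "fund_circuit C B f = neg_signed X"
    using fund_circuit_eq[OF I f om_neg_closed[OF X(1)]] X(3) by simp
  then show ?thesis by simp
qed (use X in auto)

lemma basis_exchange:
  assumes B: "basis E C B" and x: "x \<in> B" and y: "y \<in> E" "y \<notin> B"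
    and I: "independent E C (insert y (B - {x}))"
  shows "basis E C (insert y (B - {x}))"
  unfolding basis_def
proof (intro conjI allI impI I)
  fix A assume A: "independent E C A" "insert y (B - {x}) \<subseteq> A"
  show "A = insert y (B - {x})"
  proof (rule ccontr)
    assume "A \<noteq> insert y (B - {x})"
    then obtain z where z: "z \<in> A" "z \<notin> insert y (B - {x})"
      using A(2) by blast
    note Cy = fund_circuit[OF B y]
    show False
    proof (cases "z = x")
      case True
      then show False
        using Cy(3) A z independent_no_circuit[OF A(1) Cy(1)] by auto
    next
      case False
      text \<open>Eliminating x between the fundamental circuits of y and z gives a circuit in A.\<close>
      have z': "z \<in> E" "z \<notin> B"
        using A(1) z False by (auto simp: independent_def)
      note Cz = fund_circuit[OF B z']
      have Cyx: "fund_circuit C B y x \<noteq> Zero"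
        using Cy(3) independent_no_circuit[OF I Cy(1)] by (auto simp: supp_def)
      have Czx: "fund_circuit C B z x \<noteq> Zero"
        using Cz(3) A z independent_no_circuit[OF A(1) Cz(1)] by (auto simp: supp_def)
      define Cz' where "Cz' = (if fund_circuit C B z x = fund_circuit C B y x
        then neg_signed (fund_circuit C B z) else fund_circuit C B z)"
      have Cz': "Cz' \<in> C" "Cz' x = sneg (fund_circuit C B y x)" "supp Cz' = supp (fund_circuit C B z)"
        using Cz(1) om_neg_closed[OF Cz(1)] Cyx Czx
        by (auto simp: Cz'_def) (cases "fund_circuit C B z x"; cases "fund_circuit C B y x"; simp)
      have "Cz' y = Zero"
        using Cz(3) Cz'(3) y z by (auto simp: supp_def)
      then have "fund_circuit C B y \<noteq> neg_signed Cz'"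
        using Cy(2) by (metis neg_signed_apply sneg_eq_Zero_iff(1) sign.distinct(5))
      then obtain W where W: "W \<in> C" "W x = Zero" "signs_within W (fund_circuit C B y) Cz'"
        using circuit_elimination[OF Cy(1) Cz'(1) _ Cyx Cz'(2)] by blast
      have "supp W \<subseteq> A"
      proof
        fix k assume k: "k \<in> supp W"
        then have "k \<in> insert y B \<union> insert z B" "k \<noteq> x"
          using supp_signs_within[OF W(3)] Cy(3) Cz'(3) Cz(3) W(2) by (auto simp: supp_def)
        then show "k \<in> A" using A(2) z(1) by blast
      qed
      then show False
        using independent_no_circuit[OF A(1) W(1)] by blast
    qed
  qed
qed

lemma uniform_fund_circuit_nonzero:
  assumes U: "uniform E C" and B: "basis E C B"
    and f: "f \<in> E" "f \<notin> B" and b: "b \<in> B"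
  shows "fund_circuit C B f b \<noteq> Zero"
proof
  assume Zero: "fund_circuit C B f b = Zero"
  have "finite B"
    using finite_subset[OF basis_subset[OF B] om_finite_ground] .
  then have "card (insert f B - {b}) = card B"
    using f(2) b by (simp add: card_insert_if)
  moreover have "insert f B - {b} \<subseteq> E"
    using basis_subset[OF B] f(1) by blast
  ultimately have "basis E C (insert f B - {b})"
    using U B unfolding uniform_def by blast
  moreover have "supp (fund_circuit C B f) \<subseteq> insert f B - {b}"
    using fund_circuit(3)[OF B f] Zero by (auto simp: in_supp_iff)
  ultimately show False
    using independent_no_circuit[OF basis_independent fund_circuit(1)[OF B f]] by blast
qed

end

definition agrees :: "'a signed \<Rightarrow> 'a signed \<Rightarrow> bool" where
  "agrees D X \<longleftrightarrow> (\<forall>k. X k = Zero \<or> D k = Zero \<or> X k = D k) \<and> (\<exists>k. X k \<noteq> Zero \<and> X k = D k)"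

lemma not_orthogonal_agrees:
  assumes "\<not> orthogonal D X"
  shows "agrees D X \<or> agrees D (neg_signed X)"
proof -
  have no_mix: "\<not> (smult (D a) (X a) = Pos \<and> smult (D b) (X b) = Neg)" for a b
    using assms unfolding orthogonal_def by blast
  obtain a where a: "D a \<noteq> Zero" "X a \<noteq> Zero"
    using assms unfolding orthogonal_def by (auto simp: supp_def)
  show ?thesis
  proof (cases "X a = D a")
    case True
    then have "smult (D a) (X a) = Pos" using a by (cases "D a") auto
    then have "X k = Zero \<or> D k = Zero \<or> X k = D k" for k
      using no_mix[of a k] by (cases "D k"; cases "X k") auto
    then show ?thesis using True a unfolding agrees_def by blast
  next
    case False
    then have "smult (D a) (X a) = Neg" using a by (cases "D a"; cases "X a") auto
    then have "sneg (X k) = Zero \<or> D k = Zero \<or> sneg (X k) = D k" for k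
      using no_mix[of k a] by (cases "D k"; cases "X k") auto
    moreover have "sneg (X a) = D a"
      using a False by (cases "D a"; cases "X a") auto
    ultimately show ?thesis using a unfolding agrees_def by auto
  qed
qed

lemma agrees_not_orthogonal: "agrees D X \<Longrightarrow> \<not> orthogonal D X"
proof
  assume "agrees D X" "orthogonal D X"
  then obtain a where a: "X a \<noteq> Zero" "X a = D a" and conf: "\<And>k. X k = Zero \<or> D k = Zero \<or> X k = D k"
    unfolding agrees_def by blast
  then have "supp D \<inter> supp X \<noteq> {}" by (auto simp: supp_def)
  then obtain l where "smult (D l) (X l) = Neg"
    using \<open>orthogonal D X\<close> unfolding orthogonal_def by blast
  then show False using conf[of l] by (cases "D l"; cases "X l") auto
qed

lemma orthogonal_neg_signed [simp]: "orthogonal D (neg_signed X) \<longleftrightarrow> orthogonal D X"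
  unfolding orthogonal_def by (auto simp: smult_sneg_right)

lemma orthogonal_meet_single:
  assumes "orthogonal D X" "supp D \<inter> supp X \<subseteq> {a}"
  shows "supp D \<inter> supp X = {}"
proof (rule ccontr)
  assume "supp D \<inter> supp X \<noteq> {}"
  then obtain k l where kl: "smult (D k) (X k) = Pos" "smult (D l) (X l) = Neg"
    using assms(1) unfolding orthogonal_def by blast
  then have "k \<in> supp D \<inter> supp X" "l \<in> supp D \<inter> supp X"
    by (auto simp: supp_def)
  then have "k = a" "l = a" using assms(2) by auto
  then show False using kl by simp
qed

lemma orthogonal_meet_pair:
  assumes "orthogonal D X" "supp D \<inter> supp X \<subseteq> {a, b}" "D a \<noteq> Zero" "X a \<noteq> Zero"
  shows "smult (D b) (X b) = sneg (smult (D a) (X a))"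
proof -
  have "a \<in> supp D \<inter> supp X" using assms(3,4) by (simp add: supp_def)
  then obtain k l where kl: "smult (D k) (X k) = Pos" "smult (D l) (X l) = Neg"
    using assms(1) unfolding orthogonal_def by blast
  then have "k \<in> supp D \<inter> supp X" "l \<in> supp D \<inter> supp X"
    by (auto simp: supp_def)
  then have "k \<in> {a, b}" "l \<in> {a, b}" "k \<noteq> l"
    using assms(2) kl by auto
  then show ?thesis using kl by auto
qed

text \<open>The fundamental cocircuit C*(B,e); its sign at k outside B is the one that makes it
  orthogonal to the fundamental circuit C(B,k).\<close>
definition fund_cocircuit :: "'a set \<Rightarrow> 'a signed set \<Rightarrow> 'a set \<Rightarrow> 'a \<Rightarrow> 'a signed" where
  "fund_cocircuit E C B e =
     (\<lambda>k. if k = e then Pos else if k \<in> E \<and> k \<notin> B then sneg (fund_circuit C B k e) else Zero)"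

context
  fixes E :: "'a set" and C :: "'a signed set" and B :: "'a set" and e :: 'a
  assumes om: "oriented_matroid E C" and B: "basis E C B" and e: "e \<in> B"
begin

lemma fund_cocircuit_apply:
  shows "fund_cocircuit E C B e e = Pos"
    and "b \<in> B \<Longrightarrow> b \<noteq> e \<Longrightarrow> fund_cocircuit E C B e b = Zero"
    and "f \<in> E \<Longrightarrow> f \<notin> B \<Longrightarrow> fund_cocircuit E C B e f = sneg (fund_circuit C B f e)"
    and "fund_cocircuit E C B e k \<noteq> Zero \<Longrightarrow> k = e \<or> k \<in> E \<and> k \<notin> B"
  using e by (auto simp: fund_cocircuit_def split: if_splits)

lemma supp_fund_cocircuit_meet:
  assumes "supp D \<subseteq> supp (fund_cocircuit E C B e)" "f \<in> E" "f \<notin> B"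
  shows "supp D \<inter> supp (fund_circuit C B f) \<subseteq> {e, f}"
  using assms fund_cocircuit_apply(4) fund_circuit(3)[OF om B assms(2,3)]
  by (fastforce simp: supp_def)

lemma fund_cocircuit_orthogonal_fund_circuit:
  assumes f: "f \<in> E" "f \<notin> B"
  shows "orthogonal (fund_cocircuit E C B e) (fund_circuit C B f)"
proof (cases "fund_circuit C B f e = Zero")
  case True
  then have "supp (fund_cocircuit E C B e) \<inter> supp (fund_circuit C B f) = {}"
    using supp_fund_cocircuit_meet[OF order_refl f] fund_cocircuit_apply(3)[OF f]
    by (auto simp: supp_def)
  then show ?thesis by (simp add: orthogonal_def)
next
  case False
  text \<open>The products at e and at f are the sign of C(B,f) at e and its negative.\<close>
  have "smult (fund_cocircuit E C B e e) (fund_circuit C B f e) = fund_circuit C B f e"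
    "smult (fund_cocircuit E C B e f) (fund_circuit C B f f) = sneg (fund_circuit C B f e)"
    using fund_cocircuit_apply(1) fund_cocircuit_apply(3)[OF f] fund_circuit(2)[OF om B f]
    by (cases "fund_circuit C B f e"; simp)+
  then show ?thesis
    unfolding orthogonal_def using False by (cases "fund_circuit C B f e") (metis sneg.simps)+
qed

lemma fund_cocircuit_agrees_reduce:
  assumes X: "X \<in> C" "agrees (fund_cocircuit E C B e) X"
    and f: "f \<in> supp X" "f \<notin> B"
    and g: "X g \<noteq> Zero" "X g = fund_cocircuit E C B e g" "g \<noteq> f"
    and g_e: "g \<noteq> e \<or> fund_circuit C B f e = Zero"
  shows "\<exists>Z\<in>C. agrees (fund_cocircuit E C B e) Z \<and> supp Z - B \<subset> supp X - B"
proof -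
  let ?D = "fund_cocircuit E C B e"
  have fE: "f \<in> E" using om_supp_subset[OF om X(1)] f(1) by blast
  note c = fund_circuit[OF om B fE f(2)]
  have no_conflict: "X k = Zero \<or> ?D k = Zero \<or> X k = ?D k" for k
    using X(2) by (simp add: agrees_def)
  define Cf where "Cf = (if X f = Pos then neg_signed (fund_circuit C B f) else fund_circuit C B f)"
  have Cf: "Cf \<in> C" "Cf f = sneg (X f)" "supp Cf \<subseteq> insert f B"
    using c om_neg_closed[OF om c(1)] f(1) by (auto simp: Cf_def supp_def) (cases "X f"; simp)
  have Cf_g: "Cf g = Zero"
    using c(3) g g_e fund_cocircuit_apply(4)[of g] by (auto simp: Cf_def supp_def)
  text \<open>If C(B,f) meets e then the cocircuit is nonzero at f, where it agrees with X;
    this orients Cf positively at e.\<close>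
  have Cf_e: "Cf e \<noteq> Neg"
  proof (cases "fund_circuit C B f e = Zero")
    case False
    then have "X f = sneg (fund_circuit C B f e)"
      using no_conflict[of f] fund_cocircuit_apply(3)[OF fE f(2)] f(1) by (auto simp: supp_def)
    then show ?thesis
      by (cases "fund_circuit C B f e") (auto simp: Cf_def)
  qed (simp add: Cf_def)
  obtain Z where Z: "Z \<in> C" "Z f = Zero" "Z g \<noteq> Zero" "signs_within Z X Cf"
    using strong_circuit_elimination[OF om X(1) Cf(1) _ Cf(2) g(1) Cf_g] f(1)
    by (auto simp: supp_def)
  have "Z k = Zero \<or> ?D k = Zero \<or> Z k = ?D k" for k
  proof (cases "Z k = Cf k \<and> Z k \<noteq> X k \<and> Z k \<noteq> Zero \<and> ?D k \<noteq> Zero")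
    case True
    then have "k \<in> insert f B" "k = e \<or> k \<notin> B"
      using Cf(3) fund_cocircuit_apply(4)[of k] by (auto simp: supp_def)
    then have "k = e"
      using True Z(2) by auto
    then show ?thesis
      using True Cf_e fund_cocircuit_apply(1) by (cases "Cf e") auto
  next
    case False
    then show ?thesis
      using signs_withinD[OF Z(4), of k] no_conflict[of k] by auto
  qed
  moreover have "Z g = ?D g"
    using signs_withinD[OF Z(4), of g] Z(3) Cf_g g(2) by auto
  ultimately have "agrees ?D Z"
    using Z(3) unfolding agrees_def by blast
  moreover have "supp Z - B \<subset> supp X - B"
    using supp_signs_within[OF Z(4)] Cf(3) Z(2) f by (auto simp: supp_def)
  ultimately show ?thesis using Z(1) by blast
qed

lemma fund_cocircuit_not_agrees:
  "X \<in> C \<Longrightarrow> \<not> agrees (fund_cocircuit E C B e) X"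
proof (induction "card (supp X - B)" arbitrary: X rule: less_induct)
  case less
  let ?D = "fund_cocircuit E C B e"
  show ?case
  proof
    assume agree: "agrees ?D X"
    have smaller: "\<not> agrees ?D Z" if "Z \<in> C" "supp Z - B \<subset> supp X - B" for Z
      using less.hyps[OF psubset_card_mono[OF _ that(2)] that(1)] om_finite_supp[OF om less.prems]
      by blast
    have no_conflict: "X k = Zero \<or> ?D k = Zero \<or> X k = ?D k" for k
      using agree by (simp add: agrees_def)
    obtain g0 where g0: "X g0 \<noteq> Zero" "X g0 = ?D g0"
      using agree by (auto simp: agrees_def)
    have outside: "supp X - B \<noteq> {}"
      using independent_no_circuit[OF basis_independent[OF B] less.prems] by blast
    show False
    proof (cases "\<exists>g. g \<notin> B \<and> X g \<noteq> Zero \<and> X g = ?D g")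
      case True
      then obtain g where g: "g \<notin> B" "X g \<noteq> Zero" "X g = ?D g" by blast
      show False
      proof (cases "supp X - B = {g}")
        case True
        then have "supp X \<subseteq> insert g B" by blast
        moreover have gE: "g \<in> E" using om_supp_subset[OF om less.prems] g by (auto simp: supp_def)
        ultimately have "orthogonal ?D X"
          using fund_circuit_or_neg[OF om basis_independent[OF B] g(1) less.prems g(2)]
            fund_cocircuit_orthogonal_fund_circuit[OF gE g(1)] by auto
        then show False using agrees_not_orthogonal[OF agree] by blast
      next
        case False
        then obtain f where "f \<in> supp X" "f \<notin> B" "g \<noteq> f"
          using outside by blast
        then show False
          using fund_cocircuit_agrees_reduce[OF less.prems agree _ _ g(2,3)] g(1) e smaller by blast
      qed
    next
      case False
      then have "g0 = e"
        using g0 fund_cocircuit_apply(4)[of g0] by auto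
      obtain f where f: "f \<in> supp X" "f \<notin> B"
        using outside by blast
      then have "?D f = Zero"
        using False no_conflict[of f] by (auto simp: supp_def)
      then have "fund_circuit C B f e = Zero"
        using fund_cocircuit_apply(3)[of f] om_supp_subset[OF om less.prems] f by auto
      then show False
        using fund_cocircuit_agrees_reduce[OF less.prems agree f g0] \<open>g0 = e\<close> e f(2) smaller
        by blast
    qed
  qed
qed

lemma fund_cocircuit_orthogonal: "X \<in> C \<Longrightarrow> orthogonal (fund_cocircuit E C B e) X"
  using not_orthogonal_agrees fund_cocircuit_not_agrees om_neg_closed[OF om] by blast

lemma fund_cocircuit_in_cocircuits: "fund_cocircuit E C B e \<in> cocircuits E C"
proof -
  let ?D = "fund_cocircuit E C B e"
  have "?D \<noteq> zero_signed"
    using fund_cocircuit_apply(1) by (auto simp: zero_signed_def dest: fun_cong[of _ _ e])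
  moreover have "supp ?D \<subseteq> E"
    using fund_cocircuit_apply(4) basis_subset[OF B] e by (auto simp: supp_def)
  ultimately have cand: "covector_cand E C ?D"
    using fund_cocircuit_orthogonal by (simp add: covector_cand_def)
  have "supp ?D \<subseteq> supp D'" if D': "covector_cand E C D'" "supp D' \<subseteq> supp ?D" for D'
  proof -
    have orth: "orthogonal D' (fund_circuit C B f)" if "f \<in> E" "f \<notin> B" for f
      using D'(1) fund_circuit(1)[OF om B that] by (simp add: covector_cand_def)
    have "e \<in> supp D'"
    proof (rule ccontr)
      assume "e \<notin> supp D'"
      moreover obtain f where f: "f \<in> supp D'"
        using D'(1) unfolding covector_cand_def zero_signed_def supp_def by (metis (mono_tags) ext mem_Collect_eq)
      ultimately have fEB: "f \<in> E" "f \<notin> B"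
        using D'(2) fund_cocircuit_apply(4)[of f] by (auto simp: supp_def)
      have "supp D' \<inter> supp (fund_circuit C B f) = {}"
        using orthogonal_meet_single[OF orth[OF fEB], of f] supp_fund_cocircuit_meet[OF D'(2) fEB]
          \<open>e \<notin> supp D'\<close> by blast
      then show False
        using f fund_circuit(2)[OF om B fEB] by (auto simp: supp_def)
    qed
    show ?thesis
    proof
      fix k assume k: "k \<in> supp ?D"
      show "k \<in> supp D'"
      proof (rule ccontr)
        assume "k \<notin> supp D'"
        then have kEB: "k \<in> E" "k \<notin> B"
          using k \<open>e \<in> supp D'\<close> fund_cocircuit_apply(4)[of k] by (auto simp: supp_def)
        have "supp D' \<inter> supp (fund_circuit C B k) = {}"
          using orthogonal_meet_single[OF orth[OF kEB], of e] supp_fund_cocircuit_meet[OF D'(2) kEB]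
            \<open>k \<notin> supp D'\<close> by blast
        then show False
          using k \<open>e \<in> supp D'\<close> fund_cocircuit_apply(3)[OF kEB] by (auto simp: supp_def)
      qed
    qed
  qed
  then show ?thesis
    using cand unfolding cocircuits_def by blast
qed

end

lemma lift_None [simp]: "lift Y s None = s"
  by (simp add: lift_def)

lemma lift_Some [simp]: "lift Y s (Some k) = Y k"
  by (simp add: lift_def)

lemma supp_lift: "supp (lift Y s) = (if s = Zero then {} else {None}) \<union> Some ` supp Y"
proof (rule set_eqI)
  fix x show "x \<in> supp (lift Y s) \<longleftrightarrow> x \<in> (if s = Zero then {} else {None}) \<union> Some ` supp Y"
    by (cases x) (auto simp: supp_def)
qed

lemma cocircuit_orthogonal: "D \<in> cocircuits E C \<Longrightarrow> X \<in> C \<Longrightarrow> orthogonal D X"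
  by (simp add: cocircuits_def covector_cand_def)

text \<open>In the extension by [s e] the element q is parallel to s e; this is the corresponding circuit.\<close>
definition parallel_circuit :: "sign \<Rightarrow> 'a \<Rightarrow> 'a option signed" where
  "parallel_circuit s e = lift (\<lambda>k. if k = e then sneg s else Zero) Pos"

lemma parallel_circuit_apply [simp]:
  "parallel_circuit s e None = Pos" "parallel_circuit s e (Some e) = sneg s"
  "k \<noteq> e \<Longrightarrow> parallel_circuit s e (Some k) = Zero"
  by (simp_all add: parallel_circuit_def)

lemma supp_parallel_circuit: "s \<noteq> Zero \<Longrightarrow> supp (parallel_circuit s e) = {None, Some e}"
  by (auto simp: parallel_circuit_def supp_lift in_supp_iff split: if_splits)

context
  fixes E :: "'a set" and C :: "'a signed set" and Ch :: "'a option signed set"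
    and s :: sign and e :: 'a
  assumes om: "oriented_matroid E C" and lex: "lex_extension E C Ch s e"
begin

lemma lex_oriented_matroid: "oriented_matroid (ext_ground E) Ch"
  using lex by (simp add: lex_extension_def)

lemma lift_circuit_in_lex: "Y \<in> C \<Longrightarrow> lift Y Zero \<in> Ch"
  using lex unfolding lex_extension_def by blast

lemma lex_circuit_avoiding_None: "X \<in> Ch \<Longrightarrow> X None = Zero \<Longrightarrow> \<exists>Y\<in>C. X = lift Y Zero"
  using lex unfolding lex_extension_def by blast

lemma lift_cocircuit_in_lex: "Y \<in> cocircuits E C \<Longrightarrow> lift Y (lex_loc s e Y) \<in> cocircuits (ext_ground E) Ch"
  using lex by (simp add: lex_extension_def)

lemma lex_circuit_None_nonzero:
  assumes "independent E C A" "X \<in> Ch" "supp X \<subseteq> insert None (Some ` A)"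
  shows "X None \<noteq> Zero"
proof
  assume "X None = Zero"
  then obtain Y where "Y \<in> C" "X = lift Y Zero"
    using lex_circuit_avoiding_None assms(2) by blast
  moreover from this have "supp Y \<subseteq> A"
    using assms(3) by (auto simp: supp_lift)
  ultimately show False
    using independent_no_circuit[OF assms(1)] by blast
qed

lemma independent_lift:
  assumes "independent E C A"
  shows "independent (ext_ground E) Ch (Some ` A)"
  unfolding independent_def
proof (intro conjI notI)
  show "Some ` A \<subseteq> ext_ground E"
    using assms by (auto simp: independent_def ext_ground_def)
  assume "\<exists>X\<in>Ch. supp X \<subseteq> Some ` A"
  then obtain X where "X \<in> Ch" "supp X \<subseteq> Some ` A" by blast
  then show False
    using lex_circuit_None_nonzero[OF assms] by (auto simp: supp_def)
qed

lemma fund_circuit_lift: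
  assumes I: "independent (ext_ground E) Ch (insert None (Some ` B))"
    and B: "basis E C B" and f: "f \<in> E" "f \<notin> B"
  shows "fund_circuit Ch (insert None (Some ` B)) (Some f) = lift (fund_circuit C B f) Zero"
proof (rule fund_circuit_eq[OF lex_oriented_matroid I _ lift_circuit_in_lex[OF fund_circuit(1)[OF om B f]]])
  show "Some f \<notin> insert None (Some ` B)" using f(2) by auto
  show "lift (fund_circuit C B f) Zero (Some f) = Pos"
    using fund_circuit(2)[OF om B f] by simp
  show "supp (lift (fund_circuit C B f) Zero) \<subseteq> insert (Some f) (insert None (Some ` B))"
    using fund_circuit(3)[OF om B f] by (auto simp: supp_lift)
qed

text \<open>A nonzero localization prevents q from being a coloop: otherwise the fundamental
  cocircuit of q would be supported on q alone, strictly inside the lifted cocircuit.\<close>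
lemma lex_insert_None_dependent:
  assumes B: "basis E C B" and Y: "Y \<in> cocircuits E C" "lex_loc s e Y \<noteq> Zero"
  shows "\<not> independent (ext_ground E) Ch (insert None (Some ` B))"
proof
  let ?B1 = "insert None (Some ` B)"
  assume I: "independent (ext_ground E) Ch ?B1"
  have "basis (ext_ground E) Ch ?B1"
    unfolding basis_def
  proof (intro conjI allI impI I)
    fix A assume A: "independent (ext_ground E) Ch A" "?B1 \<subseteq> A"
    show "A = ?B1"
    proof (rule ccontr)
      assume "A \<noteq> ?B1"
      then obtain x where x: "x \<in> A" "x \<notin> ?B1" using A(2) by blast
      then obtain f where "x = Some f" by (cases x) auto
      then have f: "Some f \<in> A" "f \<in> E" "f \<notin> B"
        using A(1) x by (auto simp: independent_def ext_ground_def)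
      then have "supp (lift (fund_circuit C B f) Zero) \<subseteq> A"
        using fund_circuit(3)[OF om B f(2,3)] A(2) by (auto simp: supp_lift)
      then show False
        using independent_no_circuit[OF A(1) lift_circuit_in_lex[OF fund_circuit(1)[OF om B f(2,3)]]]
        by blast
    qed
  qed
  then have coc: "fund_cocircuit (ext_ground E) Ch ?B1 None \<in> cocircuits (ext_ground E) Ch"
    using fund_cocircuit_in_cocircuits[OF lex_oriented_matroid] by blast
  have Some_Zero: "fund_cocircuit (ext_ground E) Ch ?B1 None (Some f) = Zero" for f
    using fund_circuit_lift[OF I B, of f] by (auto simp: fund_cocircuit_def ext_ground_def image_iff)
  have "supp (fund_cocircuit (ext_ground E) Ch ?B1 None) \<subseteq> {None}"
  proof
    fix x assume "x \<in> supp (fund_cocircuit (ext_ground E) Ch ?B1 None)"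
    then show "x \<in> {None}" using Some_Zero by (cases x) (auto simp: supp_def)
  qed
  moreover have "Y \<noteq> zero_signed"
    using Y(1) by (simp add: cocircuits_def covector_cand_def)
  then obtain y where "Y y \<noteq> Zero"
    unfolding zero_signed_def by (meson ext)
  then have "None \<in> supp (lift Y (lex_loc s e Y))" "Some y \<in> supp (lift Y (lex_loc s e Y))"
    using Y(2) by (simp_all add: supp_def)
  ultimately have "supp (fund_cocircuit (ext_ground E) Ch ?B1 None) \<subset> supp (lift Y (lex_loc s e Y))"
    by blast
  then show False
    using coc lift_cocircuit_in_lex[OF Y(1)] unfolding cocircuits_def by blast
qed

lemma parallel_circuit_in_lex:
  assumes s: "s \<noteq> Zero" and B: "basis E C B" and e: "e \<in> B"
  shows "parallel_circuit s e \<in> Ch"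
proof -
  let ?B1 = "insert None (Some ` B)"
  have omCh: "oriented_matroid (ext_ground E) Ch"
    by (rule lex_oriented_matroid)
  have coc: "lift (fund_cocircuit E C B b) (lex_loc s e (fund_cocircuit E C B b)) \<in> cocircuits (ext_ground E) Ch"
    if "b \<in> B" for b
    using lift_cocircuit_in_lex[OF fund_cocircuit_in_cocircuits[OF om B that]] .
  have "lex_loc s e (fund_cocircuit E C B e) = s"
    using fund_cocircuit_apply(1)[OF om B e] by (cases s) (simp_all add: lex_loc_def)
  then obtain X0 where X0: "X0 \<in> Ch" "supp X0 \<subseteq> ?B1"
    using lex_insert_None_dependent[OF B fund_cocircuit_in_cocircuits[OF om B e]] s
      basis_subset[OF B] by (auto simp: independent_def ext_ground_def)
  have "X0 None \<noteq> Zero"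
    using lex_circuit_None_nonzero[OF basis_independent[OF B] X0] .
  then obtain X where X: "X \<in> Ch" "supp X \<subseteq> ?B1" "X None = Pos"
    using X0 om_neg_closed[OF omCh X0(1)] by (cases "X0 None") force+
  have meet: "supp (lift (fund_cocircuit E C B b) t) \<inter> supp X \<subseteq> {None, Some b}" if "b \<in> B" for b t
  proof
    fix x assume x: "x \<in> supp (lift (fund_cocircuit E C B b) t) \<inter> supp X"
    show "x \<in> {None, Some b}"
    proof (cases x)
      case (Some k)
      then have "fund_cocircuit E C B b k \<noteq> Zero" "k \<in> B"
        using x X(2) by (auto simp: in_supp_iff)
      then show ?thesis
        using fund_cocircuit_apply(4)[OF om B that] Some by auto
    qed simp
  qed
  have X_b: "X (Some b) = Zero" if b: "b \<in> B" "b \<noteq> e" for b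
  proof -
    have "lex_loc s e (fund_cocircuit E C B b) = Zero"
      using fund_cocircuit_apply(2)[OF om B b(1) e] b(2) by (simp add: lex_loc_def)
    then have orth: "orthogonal (lift (fund_cocircuit E C B b) Zero) X"
      using cocircuit_orthogonal[OF coc[OF b(1)] X(1)] by simp
    have "supp (lift (fund_cocircuit E C B b) Zero) \<inter> supp X \<subseteq> {Some b}"
      using meet[OF b(1), of Zero] by (auto simp: supp_lift)
    then have "supp (lift (fund_cocircuit E C B b) Zero) \<inter> supp X = {}"
      by (rule orthogonal_meet_single[OF orth])
    moreover have "Some b \<in> supp (lift (fund_cocircuit E C B b) Zero)"
      using fund_cocircuit_apply(1)[OF om B b(1)] by (simp add: in_supp_iff)
    ultimately show ?thesis
      by (metis IntI empty_iff in_supp_iff)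
  qed
  text \<open>Orthogonality to the lifted C*(B,e), which is s at q and + at e.\<close>
  have X_e: "X (Some e) = sneg s"
  proof -
    let ?D = "lift (fund_cocircuit E C B e) s"
    have "orthogonal ?D X"
      using cocircuit_orthogonal[OF coc[OF e] X(1)] \<open>lex_loc s e _ = s\<close> by simp
    moreover note meet[OF e, of s]
    ultimately have "smult (?D (Some e)) (X (Some e)) = sneg (smult (?D None) (X None))"
      by (rule orthogonal_meet_pair) (use s X(3) in auto)
    then show ?thesis
      using fund_cocircuit_apply(1)[OF om B e] X(3) by (cases s) auto
  qed
  have "X = parallel_circuit s e"
  proof
    fix x show "X x = parallel_circuit s e x"
    proof (cases x)
      case (Some k)
      then show ?thesis
        using X(2) X_b X_e by (cases "k \<in> B") (auto simp: parallel_circuit_def supp_def)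
    qed (simp add: X(3) parallel_circuit_def)
  qed
  then show ?thesis using X(1) by simp
qed

lemma lex_fund_circuit_signs:
  assumes s: "s \<noteq> Zero" and par: "parallel_circuit s e \<in> Ch"
    and B: "basis E C B" and e: "e \<in> E" "e \<notin> B"
  shows "\<exists>W\<in>Ch. W None = Pos \<and> supp W \<subseteq> insert None (Some ` B) \<and>
    (\<forall>k. W (Some k) = Zero \<or> W (Some k) = smult s (fund_circuit C B e k))"
proof -
  note Y = fund_circuit[OF om B e]
  define Ys where "Ys = (\<lambda>k. smult s (fund_circuit C B e k))"
  have "Ys \<in> C"
    using Y(1) om_neg_closed[OF om Y(1)] s by (cases s) (simp_all add: Ys_def neg_signed_def)
  moreover have "parallel_circuit s e \<noteq> neg_signed (lift Ys Zero)"
    by (metis lift_None neg_signed_apply parallel_circuit_apply(1) sign.distinct(5) sneg.simps(2))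
  ultimately obtain W where W: "W \<in> Ch" "W (Some e) = Zero"
    "signs_within W (parallel_circuit s e) (lift Ys Zero)"
    using circuit_elimination[OF lex_oriented_matroid par lift_circuit_in_lex,
        of Ys "Some e"] s Y(2) by (auto simp: Ys_def)
  have W_Some: "W (Some k) = Zero \<or> W (Some k) = Ys k" for k
    using signs_withinD[OF W(3), of "Some k"] W(2) by (cases "k = e") auto
  have supp_W: "supp W \<subseteq> insert None (Some ` B)"
  proof
    fix x assume x: "x \<in> supp W"
    show "x \<in> insert None (Some ` B)"
    proof (cases x)
      case (Some k)
      then have "fund_circuit C B e k \<noteq> Zero" "k \<noteq> e"
        using x W_Some[of k] W(2) by (auto simp: in_supp_iff Ys_def)
      then show ?thesis using Y(3) Some by (auto simp: in_supp_iff)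
    qed simp
  qed
  have "W None \<noteq> Zero"
    using lex_circuit_None_nonzero[OF basis_independent[OF B] W(1) supp_W] .
  then have "W None = Pos"
    using signs_withinD[OF W(3), of None] by auto
  then show ?thesis
    using W(1) supp_W W_Some by (auto simp: Ys_def)
qed

text \<open>Eliminating q between this circuit and the parallel circuit gives a circuit of the
  original matroid in B + e, hence plus or minus C(B,e).\<close>
lemma lex_fund_circuit_nonzero:
  assumes s: "s \<noteq> Zero" and par: "parallel_circuit s e \<in> Ch"
    and B: "basis E C B" and e: "e \<in> E" "e \<notin> B"
    and W: "W \<in> Ch" "W None = Pos" "supp W \<subseteq> insert None (Some ` B)"
    and k: "k \<noteq> e" "fund_circuit C B e k \<noteq> Zero"
  shows "W (Some k) \<noteq> Zero"
proof -
  have omCh: "oriented_matroid (ext_ground E) Ch"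
    by (rule lex_oriented_matroid)
  have "W (Some e) = Zero"
    using W(3) e(2) by (auto simp: in_supp_iff)
  then have "W \<noteq> neg_signed (neg_signed (parallel_circuit s e))"
    using s by (metis neg_signed_neg_signed parallel_circuit_apply(2) sneg_eq_Zero_iff(2))
  then obtain U where U: "U \<in> Ch" "U None = Zero" "signs_within U W (neg_signed (parallel_circuit s e))"
    using circuit_elimination[OF omCh W(1) om_neg_closed[OF omCh par], of None] W(2) by auto
  obtain Y2 where Y2: "Y2 \<in> C" "U = lift Y2 Zero"
    using lex_circuit_avoiding_None[OF U(1,2)] by blast
  have Y2_Some: "Y2 j = Zero \<or> Y2 j = W (Some j)" if "j \<noteq> e" for j
    using signs_withinD[OF U(3), of "Some j"] Y2(2) that by auto
  have supp_Y2: "supp Y2 \<subseteq> insert e B"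
  proof
    fix j assume "j \<in> supp Y2"
    then show "j \<in> insert e B"
      using Y2_Some[of j] W(3) by (cases "j = e") (auto simp: in_supp_iff)
  qed
  have "Y2 e \<noteq> Zero"
    using supp_Y2 independent_no_circuit[OF basis_independent[OF B] Y2(1)] by (auto simp: in_supp_iff)
  then have "Y2 = fund_circuit C B e \<or> Y2 = neg_signed (fund_circuit C B e)"
    by (rule fund_circuit_or_neg[OF om basis_independent[OF B] e(2) Y2(1) _ supp_Y2])
  then have "Y2 k \<noteq> Zero"
    using k(2) by auto
  then show ?thesis
    using Y2_Some[OF k(1)] by auto
qed

lemma lex_fund_circuit:
  assumes s: "s \<noteq> Zero" and par: "parallel_circuit s e \<in> Ch"
    and B: "basis E C B" and e: "e \<in> E" "e \<notin> B" and k: "k \<noteq> e"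
  shows "fund_circuit Ch (Some ` B) None (Some k) = smult s (fund_circuit C B e k)"
proof -
  obtain W where W: "W \<in> Ch" "W None = Pos" "supp W \<subseteq> insert None (Some ` B)"
    "W (Some k) = Zero \<or> W (Some k) = smult s (fund_circuit C B e k)"
    using lex_fund_circuit_signs[OF s par B e] by blast
  have "fund_circuit Ch (Some ` B) None = W"
    using fund_circuit_eq[OF lex_oriented_matroid
        independent_lift[OF basis_independent[OF B]] _ W(1,2,3)] by blast
  moreover have "W (Some k) \<noteq> Zero" if "fund_circuit C B e k \<noteq> Zero"
    using lex_fund_circuit_nonzero[OF s par B e W(1,2,3) k that] .
  ultimately show ?thesis
    using W(4) by auto
qed

end

lemma Bv_mem [simp]:
  "Inl j \<in> Bv n v \<longleftrightarrow> j < n \<and> \<not> v j" "Inr j \<in> Bv n v \<longleftrightarrow> j < n \<and> v j"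
  by (auto simp: Bv_def)

lemma Bv_subset: "Bv n v \<subseteq> E2n n"
  by (auto simp: Bv_def E2n_def)

context
  fixes n :: nat and C :: "(nat + nat) signed set"
  assumes P: "P_matroid n C"
begin

lemma P_matroid_oriented_matroid: "oriented_matroid (E2n n) C"
  using P by (simp add: P_matroid_def)

lemma P_matroid_circuit_complementary_pair:
  "X \<in> C \<Longrightarrow> \<exists>j<n. Inl j \<in> supp X \<and> Inr j \<in> supp X \<and> X (Inl j) \<noteq> sneg (X (Inr j))"
  using P unfolding P_matroid_def by blast

lemma Bv_independent: "independent (E2n n) C (Bv n v)"
  unfolding independent_def
proof (intro conjI Bv_subset notI)
  assume "\<exists>X\<in>C. supp X \<subseteq> Bv n v"
  then obtain X where "X \<in> C" "supp X \<subseteq> Bv n v" by blast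
  then obtain j where "Inl j \<in> Bv n v" "Inr j \<in> Bv n v"
    using P_matroid_circuit_complementary_pair by blast
  then show False by simp
qed

text \<open>Starting from S = B(0), exchange s_j for t_j one index at a time.\<close>
lemma Bv_basis: "basis (E2n n) C (Bv n v)"
proof -
  have "basis (E2n n) C (Bv n (\<lambda>j. j \<in> F))" if "finite F" "F \<subseteq> {..<n}" for F
    using that
  proof (induction F rule: finite_induct)
    case empty
    have "Bv n (\<lambda>j. j \<in> {}) = Sset n" by (auto simp: Bv_def Sset_def)
    then show ?case using P by (simp add: P_matroid_def)
  next
    case (insert j F)
    have "Bv n (\<lambda>k. k \<in> insert j F) = insert (Inr j) (Bv n (\<lambda>k. k \<in> F) - {Inl j})"
      using insert by (auto simp: Bv_def)
    moreover have "Inr j \<in> E2n n"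
      using insert by (auto simp: E2n_def)
    ultimately show ?case
      using basis_exchange[OF P_matroid_oriented_matroid, of "Bv n (\<lambda>k. k \<in> F)" "Inl j" "Inr j"]
        Bv_independent[of "\<lambda>k. k \<in> insert j F"] insert by auto
  qed
  from this[of "{j. j < n \<and> v j}"] have "basis (E2n n) C (Bv n (\<lambda>j. j < n \<and> v j))"
    by auto
  moreover have "Bv n (\<lambda>j. j < n \<and> v j) = Bv n v"
    by (auto simp: Bv_def)
  ultimately show ?thesis by simp
qed

lemma P_matroid_fund_circuit_partner:
  assumes i: "i < n" "\<not> w i"
  shows "fund_circuit C (Bv n w) (Inr i) (Inl i) = Pos"
proof -
  have t: "Inr i \<in> E2n n" "Inr i \<notin> Bv n w"
    using i by (auto simp: E2n_def)
  note X = fund_circuit[OF P_matroid_oriented_matroid Bv_basis t]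
  obtain j where j: "j < n" "Inl j \<in> supp (fund_circuit C (Bv n w) (Inr i))"
    "Inr j \<in> supp (fund_circuit C (Bv n w) (Inr i))"
    "fund_circuit C (Bv n w) (Inr i) (Inl j) \<noteq> sneg (fund_circuit C (Bv n w) (Inr i) (Inr j))"
    using P_matroid_circuit_complementary_pair[OF X(1)] by blast
  then have "Inl j \<in> Bv n w" "Inr j = Inr i \<or> Inr j \<in> Bv n w"
    using X(3) by auto
  then have "j = i" by auto
  then show ?thesis
    using j X(2) by (cases "fund_circuit C (Bv n w) (Inr i) (Inl i)") (auto simp: in_supp_iff)
qed

end

theorem mainTheorem7:
  fixes n i :: nat
    and C :: "(nat + nat) signed set"
    and Ch :: "(nat + nat) option signed set"
  assumes "P_matroid n C"
    and "i < n"
    and "lex_extension (E2n n) C Ch Neg (Inr i)"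
  shows "(\<forall>v. v i \<longrightarrow> puso n Ch v i = Neg \<and> (\<forall>j<n. j \<noteq> i \<longrightarrow> puso n Ch v j = Zero))
       \<and> (\<forall>w. \<not> w i \<longrightarrow> puso n Ch w i = Pos)
       \<and> (uniform (E2n n) C \<longrightarrow> (\<forall>w. \<not> w i \<longrightarrow> (\<forall>j<n. puso n Ch w j \<noteq> Zero)))"
proof -
  note P = assms(1) and i = assms(2) and lex = assms(3)
  note om = P_matroid_oriented_matroid[OF P]
  have t: "Inr i \<in> E2n n" using i by (simp add: E2n_def)
  have par: "parallel_circuit Neg (Inr i) \<in> Ch"
    using parallel_circuit_in_lex[OF om lex _ Bv_basis[OF P]] i by simp
  have upper: "fund_circuit Ch (Some ` Bv n v) None = parallel_circuit Neg (Inr i)" if "v i" for v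
  proof (rule fund_circuit_eq[OF lex_oriented_matroid[OF om lex]
        independent_lift[OF om lex Bv_independent[OF P]] _ par])
    show "supp (parallel_circuit Neg (Inr i)) \<subseteq> insert None (Some ` Bv n v)"
      using i that by (simp add: supp_parallel_circuit)
  qed auto
  have lower: "fund_circuit Ch (Some ` Bv n w) None (Some k) = sneg (fund_circuit C (Bv n w) (Inr i) k)"
    if "\<not> w i" "k \<noteq> Inr i" for w k
    using lex_fund_circuit[OF om lex _ par Bv_basis[OF P] t _ that(2)] i that(1) by simp
  show ?thesis
  proof (intro conjI allI impI)
    fix v j assume "v i" "j < n" "j \<noteq> i"
    then show "puso n Ch v j = Zero"
      by (simp add: puso_def upper parallel_circuit_def)
  next
    fix v assume "v i"
    then show "puso n Ch v i = Neg"
      by (simp add: puso_def upper)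
  next
    fix w assume "\<not> w i"
    then show "puso n Ch w i = Pos"
      using lower P_matroid_fund_circuit_partner[OF P i] by (simp add: puso_def)
  next
    fix w j assume U: "uniform (E2n n) C" and w: "\<not> w i" and j: "j < n"
    let ?e = "if w j then Inr j else Inl j"
    have "?e \<in> Bv n w" "?e \<noteq> Inr i"
      using j w by auto
    then show "puso n Ch w j \<noteq> Zero"
      using lower[of w] uniform_fund_circuit_nonzero[OF om U Bv_basis[OF P] t] w
      by (auto simp: puso_def split: if_splits sign.splits)
  qed
qed

end
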